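(* Let $a$ and $b$ be positive integers. There exists a graph $G$ with $\gamma^{LD}(G)=a$ and $\gamma^{SLD}(G)=b$ if and only if $0\le b-a\le 2^a-1$.
   Context: Graphs are finite, simple and undirected, and need not be connected. For a vertex $u$, $N(u)$ is its set of neighbours and $N[u]=N(u)\cup\{u\}$. A code is a non-empty subset $C$ of the vertex set $V$; $I(C;u)=N[u]\cap C$. A code $C$ is locating-dominating if for all distinct $u,v\in V\setminus C$ we have $I(C;u)\neq\emptyset$ and $I(C;u)\ne I(C;v)$. A code $C$ is self-locating-dominating if for every $u\in V\setminus C$ we have $I(C;u)\neq\emptyset$ and $\bigcap_{c\in I(C;u)}N[c]=\{u\}$. $\gamma^{LD}(G)$ and $\gamma^{SLD}(G)$ are the minimum sizes of a locating-dominating and a self-locating-dominating code in $G$. *)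

theory Defs
  imports Main
begin

definition is_graph :: "'a set \<Rightarrow> ('a \<Rightarrow> 'a \<Rightarrow> bool) \<Rightarrow> bool" where
  "is_graph V E \<longleftrightarrow> finite V \<and> (\<forall>u v. E u v \<longrightarrow> u \<in> V \<and> v \<in> V)
     \<and> (\<forall>u v. E u v \<longrightarrow> E v u) \<and> (\<forall>u. \<not> E u u)"

definition cnbhd :: "('a \<Rightarrow> 'a \<Rightarrow> bool) \<Rightarrow> 'a \<Rightarrow> 'a set" where
  "cnbhd E u = insert u {v. E u v}"

definition Icode :: "('a \<Rightarrow> 'a \<Rightarrow> bool) \<Rightarrow> 'a set \<Rightarrow> 'a \<Rightarrow> 'a set" where
  "Icode E C u = cnbhd E u \<inter> C"

definition is_code :: "'a set \<Rightarrow> 'a set \<Rightarrow> bool" where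
  "is_code V C \<longleftrightarrow> C \<noteq> {} \<and> C \<subseteq> V"

definition is_LD :: "'a set \<Rightarrow> ('a \<Rightarrow> 'a \<Rightarrow> bool) \<Rightarrow> 'a set \<Rightarrow> bool" where
  "is_LD V E C \<longleftrightarrow> is_code V C
     \<and> (\<forall>u \<in> V - C. Icode E C u \<noteq> {})
     \<and> (\<forall>u \<in> V - C. \<forall>v \<in> V - C. u \<noteq> v \<longrightarrow> Icode E C u \<noteq> Icode E C v)"

definition is_SLD :: "'a set \<Rightarrow> ('a \<Rightarrow> 'a \<Rightarrow> bool) \<Rightarrow> 'a set \<Rightarrow> bool" where
  "is_SLD V E C \<longleftrightarrow> is_code V C
     \<and> (\<forall>u \<in> V - C. Icode E C u \<noteq> {} \<and> (\<Inter>c \<in> Icode E C u. cnbhd E c) = {u})"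

definition gamma_LD :: "'a set \<Rightarrow> ('a \<Rightarrow> 'a \<Rightarrow> bool) \<Rightarrow> nat" where
  "gamma_LD V E = Min {card C | C. is_LD V E C}"

definition gamma_SLD :: "'a set \<Rightarrow> ('a \<Rightarrow> 'a \<Rightarrow> bool) \<Rightarrow> nat" where
  "gamma_SLD V E = Min {card C | C. is_SLD V E C}"

end

theory Submission
  imports Defs
begin

text \<open>Every self-locating-dominating code is locating-dominating, and the traces \<open>I(C;u)\<close> of the
  vertices outside a locating-dominating code \<open>C\<close> are distinct nonempty subsets of \<open>C\<close>; hence
  \<open>gamma_LD \<le> gamma_SLD \<le> card V \<le> gamma_LD + 2 ^ gamma_LD - 1\<close>.
  Conversely, for \<open>2 ^ (j - 1) \<le> k < 2 ^ j\<close> take a clique on \<open>{0..<j}\<close>, \<open>a - j\<close> isolated vertices and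
  \<open>k\<close> vertices for nonempty subsets \<open>T\<close> of the clique (among them the full clique and the sets
  \<open>{0..<j} - {c}\<close>, \<open>c \<ge> 1\<close>), each joined to the clique vertices in \<open>T\<close>. The clique and the isolated
  vertices form an optimal locating-dominating code, while the open neighbourhood of every vertex lies
  in the closed neighbourhood of another vertex, which forces every self-locating-dominating code to
  be the whole vertex set.\<close>

lemma is_graph_sym: "is_graph V E \<Longrightarrow> E u v \<Longrightarrow> E v u"
  unfolding is_graph_def by blast

lemma is_graph_edge_in: "is_graph V E \<Longrightarrow> E u v \<Longrightarrow> u \<in> V \<and> v \<in> V"
  unfolding is_graph_def by blast

lemma is_graph_finite: "is_graph V E \<Longrightarrow> finite V"
  unfolding is_graph_def by blast

lemma mem_cnbhd_iff: "v \<in> cnbhd E w \<longleftrightarrow> v = w \<or> E w v"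
  unfolding cnbhd_def by auto

lemma cnbhd_subset: "is_graph V E \<Longrightarrow> u \<in> V \<Longrightarrow> cnbhd E u \<subseteq> V"
  unfolding cnbhd_def using is_graph_edge_in by fastforce

lemma is_LD_vertices: "is_graph V E \<Longrightarrow> V \<noteq> {} \<Longrightarrow> is_LD V E V"
  unfolding is_LD_def is_code_def by auto

lemma is_SLD_vertices: "is_graph V E \<Longrightarrow> V \<noteq> {} \<Longrightarrow> is_SLD V E V"
  unfolding is_SLD_def is_code_def by auto

text \<open>If \<open>u\<close> and \<open>v\<close> have the same trace, then \<open>v\<close> lies in \<open>N[c]\<close> for every \<open>c \<in> I(C;u)\<close>,
  contradicting the self-location of \<open>u\<close>.\<close>
lemma SLD_imp_LD:
  assumes g: "is_graph V E" and sld: "is_SLD V E C"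
  shows "is_LD V E C"
proof -
  have code: "is_code V C"
    and sep: "\<forall>u \<in> V - C. Icode E C u \<noteq> {} \<and> (\<Inter>c \<in> Icode E C u. cnbhd E c) = {u}"
    using sld unfolding is_SLD_def by auto
  have "Icode E C u \<noteq> Icode E C v" if u: "u \<in> V - C" and v: "v \<in> V - C" and "u \<noteq> v" for u v
  proof
    assume same: "Icode E C u = Icode E C v"
    have "v \<in> (\<Inter>c \<in> Icode E C u. cnbhd E c)"
    proof
      fix c assume "c \<in> Icode E C u"
      then have "c \<in> cnbhd E v" and "c \<noteq> v"
        using same v unfolding Icode_def by auto
      then have "E v c" unfolding mem_cnbhd_iff by blast
      then show "v \<in> cnbhd E c" using is_graph_sym[OF g] unfolding mem_cnbhd_iff by blast
    qed
    moreover have "(\<Inter>c \<in> Icode E C u. cnbhd E c) = {u}" using bspec[OF sep u] by (rule conjunct2)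
    ultimately show False using \<open>u \<noteq> v\<close> by simp
  qed
  then show ?thesis using code sep unfolding is_LD_def by blast
qed

lemma finite_code_cards:
  assumes "finite V" and "\<And>C. P C \<Longrightarrow> C \<subseteq> V"
  shows "finite {card C | C. P C}"
proof (rule finite_subset)
  show "{card C | C. P C} \<subseteq> {..card V}"
    using card_mono[OF assms(1) assms(2)] by auto
qed simp

lemma Min_code_cards_attained:
  assumes "finite V" and "\<And>C. P C \<Longrightarrow> C \<subseteq> V" and "P V"
  shows "\<exists>C. P C \<and> card C = Min {card C | C. P C}"
proof -
  have "Min {card C | C. P C} \<in> {card C | C. P C}"
    using assms(3) by (intro Min_in finite_code_cards[OF assms(1,2)]) auto
  then show ?thesis by auto
qed

lemma Min_code_cards_le:
  assumes "finite V" and "\<And>C. P C \<Longrightarrow> C \<subseteq> V" and "P C"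
  shows "Min {card C | C. P C} \<le> card C"
  using assms(3) by (intro Min_le finite_code_cards[OF assms(1,2)]) auto

lemma LD_code_subset: "is_LD V E C \<Longrightarrow> C \<subseteq> V"
  unfolding is_LD_def is_code_def by blast

lemma SLD_code_subset: "is_SLD V E C \<Longrightarrow> C \<subseteq> V"
  unfolding is_SLD_def is_code_def by blast

lemma gamma_LD_attained:
  assumes "is_graph V E" and "V \<noteq> {}"
  shows "\<exists>C. is_LD V E C \<and> card C = gamma_LD V E"
  unfolding gamma_LD_def
  by (rule Min_code_cards_attained[where P = "is_LD V E", OF is_graph_finite[OF assms(1)] LD_code_subset is_LD_vertices[OF assms]])

lemma gamma_LD_le:
  assumes "is_graph V E" and "is_LD V E C"
  shows "gamma_LD V E \<le> card C"
  unfolding gamma_LD_def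
  by (rule Min_code_cards_le[where P = "is_LD V E", OF is_graph_finite[OF assms(1)] LD_code_subset assms(2)])

lemma gamma_SLD_attained:
  assumes "is_graph V E" and "V \<noteq> {}"
  shows "\<exists>C. is_SLD V E C \<and> card C = gamma_SLD V E"
  unfolding gamma_SLD_def
  by (rule Min_code_cards_attained[where P = "is_SLD V E", OF is_graph_finite[OF assms(1)] SLD_code_subset is_SLD_vertices[OF assms]])

lemma gamma_SLD_le:
  assumes "is_graph V E" and "is_SLD V E C"
  shows "gamma_SLD V E \<le> card C"
  unfolding gamma_SLD_def
  by (rule Min_code_cards_le[where P = "is_SLD V E", OF is_graph_finite[OF assms(1)] SLD_code_subset assms(2)])

lemma gamma_LD_le_gamma_SLD:
  assumes "is_graph V E" and "V \<noteq> {}"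
  shows "gamma_LD V E \<le> gamma_SLD V E"
proof -
  obtain C where "is_SLD V E C" and "card C = gamma_SLD V E"
    using gamma_SLD_attained[OF assms] by blast
  then show ?thesis using gamma_LD_le[OF assms(1) SLD_imp_LD[OF assms(1)]] by metis
qed

lemma gamma_SLD_le_card:
  assumes "is_graph V E" and "V \<noteq> {}"
  shows "gamma_SLD V E \<le> card V"
  by (rule gamma_SLD_le[OF assms(1) is_SLD_vertices[OF assms]])

text \<open>The traces of the non-code vertices of a neighbourhood-closed set \<open>H\<close> are distinct
  nonempty subsets of \<open>D \<inter> H\<close>.\<close>
lemma card_closed_set_LD_bound:
  assumes g: "is_graph V E" and ld: "is_LD V E D" and HV: "H \<subseteq> V"
    and closed: "\<And>u v. u \<in> H \<Longrightarrow> E u v \<Longrightarrow> v \<in> H"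
  shows "card H + 1 \<le> card (D \<inter> H) + 2 ^ card (D \<inter> H)"
proof -
  have finH: "finite H" using is_graph_finite[OF g] HV finite_subset by blast
  have nonempty: "\<forall>u \<in> V - D. Icode E D u \<noteq> {}"
    and distinct: "\<forall>u \<in> V - D. \<forall>v \<in> V - D. u \<noteq> v \<longrightarrow> Icode E D u \<noteq> Icode E D v"
    using ld unfolding is_LD_def by auto
  have inj: "inj_on (Icode E D) (H - D)"
    using distinct HV unfolding inj_on_def by blast
  have traces: "Icode E D ` (H - D) \<subseteq> Pow (D \<inter> H) - {{}}"
  proof
    fix X assume "X \<in> Icode E D ` (H - D)"
    then obtain u where u: "u \<in> H - D" and X: "X = Icode E D u" by blast
    have "X \<noteq> {}" using nonempty u X HV by blast
    moreover have "X \<subseteq> D \<inter> H" using u closed unfolding X Icode_def cnbhd_def by blast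
    ultimately show "X \<in> Pow (D \<inter> H) - {{}}" by blast
  qed
  have "card (H - D) \<le> card (Pow (D \<inter> H) - {{}})"
    using card_inj_on_le[OF inj traces] finH by simp
  also have "\<dots> = 2 ^ card (D \<inter> H) - 1"
    using finH by (simp add: card_Pow card_Diff_singleton del: Pow_Int_eq)
  finally have traces_bound: "card (H - D) + 1 \<le> 2 ^ card (D \<inter> H)"
    using one_le_power[of "2::nat" "card (D \<inter> H)"] by linarith
  have "card H = card (H - D) + card (D \<inter> H)"
    using finH by (metis Int_commute card_Int_Diff add.commute)
  then show ?thesis using traces_bound by simp
qed

lemma card_le_gamma_LD_exp:
  assumes g: "is_graph V E" and "V \<noteq> {}"
  shows "card V + 1 \<le> gamma_LD V E + 2 ^ gamma_LD V E"
proof -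
  obtain C where C: "is_LD V E C" "card C = gamma_LD V E"
    using gamma_LD_attained[OF assms] by blast
  have "C \<inter> V = C" using LD_code_subset[OF C(1)] by blast
  moreover have "card V + 1 \<le> card (C \<inter> V) + 2 ^ card (C \<inter> V)"
    using is_graph_edge_in[OF g] by (intro card_closed_set_LD_bound[OF g C(1) order_refl]) blast
  ultimately show ?thesis using C(2) by simp
qed

text \<open>If \<open>N(u) \<subseteq> N[w]\<close> for some \<open>w \<noteq> u\<close>, then \<open>w\<close> lies in \<open>N[c]\<close> for every \<open>c \<in> I(C;u) \<subseteq> N(u)\<close>,
  so no vertex outside the code can be self-located.\<close>
lemma SLD_eq_vertices_if_nbhds_covered:
  assumes g: "is_graph V E" and sld: "is_SLD V E D"
    and covered: "\<And>u. u \<in> V \<Longrightarrow> {v. E u v} \<noteq> {} \<Longrightarrow>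
                      \<exists>w \<in> V. w \<noteq> u \<and> {v. E u v} \<subseteq> cnbhd E w"
  shows "D = V"
proof (rule ccontr)
  assume "D \<noteq> V"
  then obtain u where u: "u \<in> V - D" using SLD_code_subset[OF sld] by blast
  have "Icode E D u \<noteq> {} \<and> (\<Inter>c \<in> Icode E D u. cnbhd E c) = {u}"
    using sld u unfolding is_SLD_def by blast
  then have nonempty: "Icode E D u \<noteq> {}" and located: "(\<Inter>c \<in> Icode E D u. cnbhd E c) = {u}"
    by (rule conjunct1, rule conjunct2)
  have trace_nbhd: "Icode E D u \<subseteq> {v. E u v}"
    using u unfolding Icode_def cnbhd_def by blast
  then have "{v. E u v} \<noteq> {}" using nonempty by blast
  then obtain w where w: "w \<in> V" "w \<noteq> u" "{v. E u v} \<subseteq> cnbhd E w"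
    using covered[of u] u by blast
  have "w \<in> (\<Inter>c \<in> Icode E D u. cnbhd E c)"
  proof
    fix c assume "c \<in> Icode E D u"
    then have "c \<in> cnbhd E w" using trace_nbhd w(3) by blast
    then have "c = w \<or> E c w" using is_graph_sym[OF g] unfolding mem_cnbhd_iff by blast
    then show "w \<in> cnbhd E c" unfolding mem_cnbhd_iff by blast
  qed
  then have "w = u" unfolding located by blast
  then show False using w(2) by contradiction
qed

lemma gamma_SLD_eq_card_if_nbhds_covered:
  assumes g: "is_graph V E" and "V \<noteq> {}"
    and "\<And>u. u \<in> V \<Longrightarrow> {v. E u v} \<noteq> {} \<Longrightarrow>
               \<exists>w \<in> V. w \<noteq> u \<and> {v. E u v} \<subseteq> cnbhd E w"
  shows "gamma_SLD V E = card V"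
proof -
  obtain D where D: "is_SLD V E D" and "card D = gamma_SLD V E"
    using gamma_SLD_attained[OF g \<open>V \<noteq> {}\<close>] by blast
  moreover have "D = V" by (rule SLD_eq_vertices_if_nbhds_covered[OF g D assms(3)])
  ultimately show ?thesis by simp
qed

lemma isolated_in_LD:
  assumes "is_LD V E D" and "u \<in> V" and "\<And>v. \<not> E u v"
  shows "u \<in> D"
proof (rule ccontr)
  assume "u \<notin> D"
  then have "Icode E D u \<noteq> {}" using assms(1,2) unfolding is_LD_def by blast
  moreover have "Icode E D u \<subseteq> {u}" using assms(3) unfolding Icode_def cnbhd_def by blast
  ultimately show False using \<open>u \<notin> D\<close> unfolding Icode_def by blast
qed

text \<open>The vertices outside \<open>H\<close> are isolated, hence in the code; inside \<open>H\<close> the trace count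
  forces at least \<open>j\<close> code vertices.\<close>
lemma LD_card_lower_bound:
  assumes g: "is_graph V E" and ld: "is_LD V E D" and HV: "H \<subseteq> V"
    and edges: "\<And>u v. E u v \<Longrightarrow> u \<in> H"
    and large: "\<And>m. m < j \<Longrightarrow> m + 2 ^ m \<le> card H"
  shows "card (V - H) + j \<le> card D"
proof -
  have fin: "finite V" using is_graph_finite[OF g] .
  have DV: "D \<subseteq> V" using LD_code_subset[OF ld] .
  have outside: "V - H \<subseteq> D"
    using isolated_in_LD[OF ld] edges by blast
  have "card H + 1 \<le> card (D \<inter> H) + 2 ^ card (D \<inter> H)"
    by (rule card_closed_set_LD_bound[OF g ld HV]) (use edges is_graph_sym[OF g] in blast)
  then have inside: "j \<le> card (D \<inter> H)"
    using large[of "card (D \<inter> H)"] by linarith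
  have "D = (V - H) \<union> (D \<inter> H)" using outside DV by blast
  also have "card \<dots> = card (V - H) + card (D \<inter> H)"
    using fin DV by (intro card_Un_disjoint) (auto intro: finite_subset)
  finally have "card D = card (V - H) + card (D \<inter> H)" .
  then show ?thesis using inside by linarith
qed

text \<open>Vertices \<open>Inl i\<close> with \<open>i < j\<close> form a clique, \<open>Inl i\<close> with \<open>j \<le> i < j + s\<close> are isolated, and
  there is a vertex \<open>Inr T\<close> for each \<open>T \<in> F\<close>, adjacent to the clique vertices in \<open>T\<close>. Two subset
  vertices are adjacent when their union is the whole clique; the vertex of the full clique is
  moreover only adjacent to subset vertices containing \<open>0\<close>, so that its neighbourhood lies in the
  closed neighbourhood of \<open>Inl 0\<close>.\<close>
fun gadget_edge :: "nat \<Rightarrow> nat set set \<Rightarrow> nat + nat set \<Rightarrow> nat + nat set \<Rightarrow> bool" where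
  "gadget_edge j F (Inl i) (Inl i') \<longleftrightarrow> i < j \<and> i' < j \<and> i \<noteq> i'"
| "gadget_edge j F (Inl i) (Inr T) \<longleftrightarrow> T \<in> F \<and> i \<in> T"
| "gadget_edge j F (Inr T) (Inl i) \<longleftrightarrow> T \<in> F \<and> i \<in> T"
| "gadget_edge j F (Inr S) (Inr T) \<longleftrightarrow> S \<in> F \<and> T \<in> F \<and> S \<noteq> T \<and> S \<union> T = {0..<j}
      \<and> (S = {0..<j} \<longrightarrow> 0 \<in> T) \<and> (T = {0..<j} \<longrightarrow> 0 \<in> S)"

definition gadget_vertices :: "nat \<Rightarrow> nat \<Rightarrow> nat set set \<Rightarrow> (nat + nat set) set" where
  "gadget_vertices j s F = Inl ` {0..<j+s} \<union> Inr ` F"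

definition gadget_core :: "nat \<Rightarrow> nat set set \<Rightarrow> (nat + nat set) set" where
  "gadget_core j F = Inl ` {0..<j} \<union> Inr ` F"

locale gadget =
  fixes j :: nat and F :: "nat set set"
  assumes subsets: "F \<subseteq> Pow {0..<j} - {{}}"
    and full_mem: "1 \<le> j \<Longrightarrow> {0..<j} \<in> F"
    and cosingleton_mem: "c \<in> {1..<j} \<Longrightarrow> {0..<j} - {c} \<in> F"
begin

abbreviation "E \<equiv> gadget_edge j F"

lemma subset_clique: "T \<in> F \<Longrightarrow> T \<subseteq> {0..<j}"
  using subsets by blast

lemma subset_nonempty: "T \<in> F \<Longrightarrow> T \<noteq> {}"
  using subsets by blast

lemma finite_F: "finite F"
  using subsets by (rule finite_subset) simp

lemma edge_in_core: "E u v \<Longrightarrow> u \<in> gadget_core j F \<and> v \<in> gadget_core j F"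
  using subset_clique by (cases u; cases v) (auto simp: gadget_core_def)

lemma is_graph: "is_graph (gadget_vertices j s F) E"
proof -
  have "finite (gadget_vertices j s F)" using finite_F by (simp add: gadget_vertices_def)
  moreover have "u \<in> gadget_vertices j s F" and "v \<in> gadget_vertices j s F" if "E u v" for u v
    using edge_in_core[OF that] by (auto simp: gadget_core_def gadget_vertices_def)
  moreover have "E v u" if "E u v" for u v
    using that by (cases u; cases v) auto
  moreover have "\<not> E u u" for u
    by (cases u) auto
  ultimately show ?thesis unfolding is_graph_def by blast
qed

lemma core_subset: "gadget_core j F \<subseteq> gadget_vertices j s F"
  unfolding gadget_core_def gadget_vertices_def by auto

lemma card_core: "card (gadget_core j F) = j + card F"
  unfolding gadget_core_def using finite_F
  by (subst card_Un_disjoint) (auto simp: card_image)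

lemma card_outside_core: "card (gadget_vertices j s F - gadget_core j F) = s"
proof -
  have "gadget_vertices j s F - gadget_core j F = Inl ` {j..<j+s}"
    unfolding gadget_core_def gadget_vertices_def by (auto simp: image_iff not_less)
  then show ?thesis by (simp add: card_image)
qed

lemma card_vertices: "card (gadget_vertices j s F) = j + s + card F"
  unfolding gadget_vertices_def using finite_F
  by (subst card_Un_disjoint) (auto simp: card_image)

lemma trace_subset_vertex:
  assumes "T \<in> F"
  shows "Icode E (Inl ` {0..<j+s}) (Inr T) = Inl ` T"
  using assms subset_clique[OF assms] unfolding Icode_def cnbhd_def by auto

lemma LD_non_subset_vertices:
  assumes "1 \<le> j + s"
  shows "is_LD (gadget_vertices j s F) E (Inl ` {0..<j+s})"
proof -
  let ?V = "gadget_vertices j s F" and ?C = "Inl ` {0..<j+s} :: (nat + nat set) set"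
  have rest: "?V - ?C = Inr ` F"
    unfolding gadget_vertices_def by auto
  have "is_code ?V ?C"
    using assms unfolding is_code_def gadget_vertices_def by auto
  moreover have "Icode E ?C u \<noteq> {}" if "u \<in> ?V - ?C" for u
    using that trace_subset_vertex subset_nonempty unfolding rest by auto
  moreover have "Icode E ?C u \<noteq> Icode E ?C v" if "u \<in> ?V - ?C" "v \<in> ?V - ?C" "u \<noteq> v" for u v
    using that trace_subset_vertex unfolding rest by (auto simp: inj_image_eq_iff)
  ultimately show ?thesis unfolding is_LD_def by blast
qed

lemma nbhd_clique_zero_covered:
  assumes "1 \<le> j"
  shows "{v. E (Inl 0) v} \<subseteq> cnbhd E (Inr {0..<j})"
proof
  fix v assume "v \<in> {v. E (Inl 0) v}"
  then show "v \<in> cnbhd E (Inr {0..<j})"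
    using full_mem[OF assms] subset_clique unfolding mem_cnbhd_iff
    by (cases v) (auto simp: subset_iff)
qed

lemma nbhd_clique_covered:
  assumes c: "c \<in> {1..<j}"
  shows "{v. E (Inl c) v} \<subseteq> cnbhd E (Inr ({0..<j} - {c}))"
proof
  let ?S = "{0..<j} - {c}"
  have S: "?S \<in> F" using cosingleton_mem[OF c] .
  have "c \<in> {0..<j}" using c by simp
  fix v assume v: "v \<in> {v. E (Inl c) v}"
  show "v \<in> cnbhd E (Inr ?S)"
  proof (cases v)
    case (Inl i)
    then have "i \<in> ?S" using v by simp
    then show ?thesis using S Inl unfolding mem_cnbhd_iff by simp
  next
    case (Inr T)
    then have T: "T \<in> F" "c \<in> T" using v by simp_all
    have "?S \<union> T = {0..<j}" using subset_clique[OF T(1)] T(2) by auto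
    moreover have "?S \<noteq> T" using T(2) by blast
    moreover have "?S \<noteq> {0..<j}" using \<open>c \<in> {0..<j}\<close> by blast
    moreover have "0 \<in> ?S" using c by simp
    ultimately show ?thesis using S T Inr unfolding mem_cnbhd_iff by simp
  qed
qed

lemma nbhd_full_covered:
  assumes "1 \<le> j"
  shows "{v. E (Inr {0..<j}) v} \<subseteq> cnbhd E (Inl 0)"
proof
  fix v assume v: "v \<in> {v. E (Inr {0..<j}) v}"
  show "v \<in> cnbhd E (Inl 0)"
  proof (cases v)
    case (Inl i)
    then have "i < j" using v by simp
    then show ?thesis using assms Inl unfolding mem_cnbhd_iff by (cases "i = 0") simp_all
  next
    case (Inr S)
    then have "S \<in> F" and "0 \<in> S" using v by simp_all
    then show ?thesis using Inr unfolding mem_cnbhd_iff by simp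
  qed
qed

lemma nbhd_subset_covered:
  assumes T: "T \<in> F" and c: "c < j" "c \<notin> T"
  shows "{v. E (Inr T) v} \<subseteq> cnbhd E (Inl c)"
proof
  fix v assume v: "v \<in> {v. E (Inr T) v}"
  show "v \<in> cnbhd E (Inl c)"
  proof (cases v)
    case (Inl i)
    then have "i \<in> T" using v by simp
    then have "i < j" and "i \<noteq> c" using subset_clique[OF T] c by auto
    then show ?thesis using c Inl unfolding mem_cnbhd_iff by simp
  next
    case (Inr S)
    then have "S \<in> F" and "T \<union> S = {0..<j}" using v by simp_all
    then have "c \<in> T \<union> S" using c(1) by simp
    then have "c \<in> S" using c(2) by blast
    then show ?thesis using \<open>S \<in> F\<close> Inr unfolding mem_cnbhd_iff by simp
  qed
qed


lemma nbhds_covered: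
  assumes u: "u \<in> gadget_vertices j s F" and ne: "{v. E u v} \<noteq> {}"
  shows "\<exists>w \<in> gadget_vertices j s F. w \<noteq> u \<and> {v. E u v} \<subseteq> cnbhd E w"
proof (cases u)
  case (Inl i)
  have "u \<in> gadget_core j F" using ne edge_in_core by blast
  then have "i < j" using Inl unfolding gadget_core_def by auto
  show ?thesis
  proof (cases "i = 0")
    case True
    have "Inr {0..<j} \<in> gadget_vertices j s F"
      using full_mem \<open>i < j\<close> unfolding gadget_vertices_def by simp
    moreover have "{v. E u v} \<subseteq> cnbhd E (Inr {0..<j})"
      using nbhd_clique_zero_covered \<open>i < j\<close> unfolding Inl True by simp
    ultimately show ?thesis using Inl by (intro bexI[where x = "Inr {0..<j}"] conjI) simp_all
  next
    case False
    then have c: "i \<in> {1..<j}" using \<open>i < j\<close> by simp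
    have "Inr ({0..<j} - {i}) \<in> gadget_vertices j s F"
      using cosingleton_mem[OF c] unfolding gadget_vertices_def by simp
    moreover have "{v. E u v} \<subseteq> cnbhd E (Inr ({0..<j} - {i}))"
      using nbhd_clique_covered[OF c] unfolding Inl .
    ultimately show ?thesis using Inl by (intro bexI[where x = "Inr ({0..<j} - {i})"] conjI) simp_all
  qed
next
  case (Inr T)
  have T: "T \<in> F" using u Inr unfolding gadget_vertices_def by auto
  then obtain t where "t \<in> T" using subset_nonempty by blast
  then have "1 \<le> j" using subset_clique[OF T] by auto
  show ?thesis
  proof (cases "T = {0..<j}")
    case True
    have "Inl 0 \<in> gadget_vertices j s F"
      using \<open>1 \<le> j\<close> unfolding gadget_vertices_def by simp
    moreover have "{v. E u v} \<subseteq> cnbhd E (Inl 0)"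
      using nbhd_full_covered[OF \<open>1 \<le> j\<close>] unfolding Inr True .
    ultimately show ?thesis using Inr by (intro bexI[where x = "Inl 0"] conjI) simp_all
  next
    case False
    then have "\<not> {0..<j} \<subseteq> T" using subset_clique[OF T] by blast
    then obtain c where "c \<in> {0..<j}" and "c \<notin> T" by blast
    then have c: "c < j" "c \<notin> T" by simp_all
    have "Inl c \<in> gadget_vertices j s F"
      using c unfolding gadget_vertices_def by simp
    moreover have "{v. E u v} \<subseteq> cnbhd E (Inl c)"
      using nbhd_subset_covered[OF T c] unfolding Inr .
    ultimately show ?thesis using Inr by (intro bexI[where x = "Inl c"] conjI) simp_all
  qed
qed

lemma gamma_LD_SLD_eq:
  assumes "1 \<le> j + s" and large: "\<And>m. m < j \<Longrightarrow> 2 ^ m \<le> card F"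
  shows "gamma_LD (gadget_vertices j s F) E = j + s"
    and "gamma_SLD (gadget_vertices j s F) E = j + s + card F"
proof -
  let ?V = "gadget_vertices j s F"
  have ne: "?V \<noteq> {}" using assms(1) unfolding gadget_vertices_def by auto
  show "gamma_SLD ?V E = j + s + card F"
    using gamma_SLD_eq_card_if_nbhds_covered[OF is_graph ne nbhds_covered] card_vertices by simp
  obtain D where D: "is_LD ?V E D" "card D = gamma_LD ?V E"
    using gamma_LD_attained[OF is_graph ne] by blast
  have "m + 2 ^ m \<le> card (gadget_core j F)" if "m < j" for m
    using large[OF that] that card_core by simp
  then have "card (?V - gadget_core j F) + j \<le> card D"
    by (intro LD_card_lower_bound[OF is_graph D(1) core_subset]) (use edge_in_core in blast)
  then have "j + s \<le> gamma_LD ?V E" using card_outside_core D(2) by simp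
  moreover have "gamma_LD ?V E \<le> card (Inl ` {0..<j+s} :: (nat + nat set) set)"
    by (rule gamma_LD_le[OF is_graph LD_non_subset_vertices[OF assms(1)]])
  ultimately show "gamma_LD ?V E = j + s" by (simp add: card_image)
qed

end

lemma card_sets_image_eq:
  assumes inj: "inj_on f V"
    and P: "\<And>C. P C \<Longrightarrow> C \<subseteq> V" and Q: "\<And>C. Q C \<Longrightarrow> C \<subseteq> f ` V"
    and iff: "\<And>C. C \<subseteq> V \<Longrightarrow> Q (f ` C) \<longleftrightarrow> P C"
  shows "{card C | C. Q C} = {card C | C. P C}"
proof (intro set_eqI iffI)
  fix n assume "n \<in> {card C | C. Q C}"
  then obtain C' where C': "Q C'" "n = card C'" by blast
  obtain C where C: "C \<subseteq> V" "C' = f ` C"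
    using subset_imageE[OF Q[OF C'(1)]] by metis
  have "card C' = card C" using C inj by (simp add: card_image inj_on_subset)
  then show "n \<in> {card C | C. P C}" using C' C iff by auto
next
  fix n assume "n \<in> {card C | C. P C}"
  then obtain C where C: "P C" "n = card C" by blast
  have "card (f ` C) = card C" using P[OF C(1)] inj by (simp add: card_image inj_on_subset)
  then show "n \<in> {card C | C. Q C}" using C iff P by (metis (mono_tags, lifting) mem_Collect_eq)
qed

definition relabel_edges :: "('a \<Rightarrow> 'b) \<Rightarrow> 'a set \<Rightarrow> ('a \<Rightarrow> 'a \<Rightarrow> bool) \<Rightarrow> 'b \<Rightarrow> 'b \<Rightarrow> bool" where
  "relabel_edges f V E x y \<longleftrightarrow> (\<exists>u\<in>V. \<exists>v\<in>V. x = f u \<and> y = f v \<and> E u v)"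

context
  fixes V :: "'a set" and E :: "'a \<Rightarrow> 'a \<Rightarrow> bool" and f :: "'a \<Rightarrow> 'b"
  assumes g: "is_graph V E" and inj: "inj_on f V"
begin

private abbreviation "E' \<equiv> relabel_edges f V E"

lemma is_graph_relabel: "is_graph (f ` V) E'"
proof -
  have "\<not> E' x x" for x
  proof
    assume "E' x x"
    then obtain u v where "u \<in> V" "v \<in> V" "f u = f v" "E u v" unfolding relabel_edges_def by blast
    then show False using inj g unfolding inj_on_def is_graph_def by metis
  qed
  then show ?thesis
    using is_graph_finite[OF g] is_graph_sym[OF g]
    unfolding is_graph_def relabel_edges_def by blast
qed

lemma cnbhd_relabel:
  assumes u: "u \<in> V"
  shows "cnbhd E' (f u) = f ` cnbhd E u"
proof
  show "cnbhd E' (f u) \<subseteq> f ` cnbhd E u"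
  proof
    fix x assume "x \<in> cnbhd E' (f u)"
    then consider "x = f u" | "E' (f u) x" unfolding mem_cnbhd_iff by blast
    then show "x \<in> f ` cnbhd E u"
    proof cases
      case 2
      then obtain u' v where "u' \<in> V" "v \<in> V" "f u = f u'" "x = f v" "E u' v"
        unfolding relabel_edges_def by blast
      moreover from this have "u' = u" using inj u unfolding inj_on_def by metis
      ultimately show ?thesis unfolding cnbhd_def by blast
    qed (simp add: cnbhd_def)
  qed
  show "f ` cnbhd E u \<subseteq> cnbhd E' (f u)"
    using u is_graph_edge_in[OF g] unfolding cnbhd_def relabel_edges_def by blast
qed

lemma Icode_relabel:
  assumes "u \<in> V" and "C \<subseteq> V"
  shows "Icode E' (f ` C) (f u) = f ` Icode E C u"
  unfolding Icode_def cnbhd_relabel[OF assms(1)]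
  using inj_on_image_Int[OF inj cnbhd_subset[OF g assms(1)] assms(2)] by (rule sym)

lemma relabel_image_eq_iff: "A \<subseteq> V \<Longrightarrow> B \<subseteq> V \<Longrightarrow> f ` A = f ` B \<longleftrightarrow> A = B"
  using inj_on_image_eq_iff[OF inj] .

lemma is_LD_relabel_iff:
  assumes C: "C \<subseteq> V"
  shows "is_LD (f ` V) E' (f ` C) \<longleftrightarrow> is_LD V E C"
proof -
  have rest: "f ` V - f ` C = f ` (V - C)" using inj_on_image_set_diff[OF inj _ C] by simp
  have traces: "Icode E C u \<subseteq> V" if "u \<in> V" for u
    using cnbhd_subset[OF g that] unfolding Icode_def by blast
  have "is_code (f ` V) (f ` C) \<longleftrightarrow> is_code V C"
    using C relabel_image_eq_iff unfolding is_code_def by auto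
  moreover have "(\<forall>x \<in> f ` V - f ` C. Icode E' (f ` C) x \<noteq> {}) \<longleftrightarrow> (\<forall>u \<in> V - C. Icode E C u \<noteq> {})"
    unfolding rest using Icode_relabel C by auto
  moreover have "(\<forall>x \<in> f ` V - f ` C. \<forall>y \<in> f ` V - f ` C. x \<noteq> y \<longrightarrow> Icode E' (f ` C) x \<noteq> Icode E' (f ` C) y)
      \<longleftrightarrow> (\<forall>u \<in> V - C. \<forall>v \<in> V - C. u \<noteq> v \<longrightarrow> Icode E C u \<noteq> Icode E C v)"
    unfolding rest using Icode_relabel[OF _ C] relabel_image_eq_iff traces inj_on_eq_iff[OF inj]
    by (auto simp del: inj_on_image_eq_iff)
  ultimately show ?thesis unfolding is_LD_def by blast
qed


lemma INT_cnbhd_relabel: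
  assumes I: "I \<subseteq> V" and c: "c \<in> I"
  shows "(\<Inter>x \<in> f ` I. cnbhd E' x) = f ` (\<Inter>c \<in> I. cnbhd E c)"
proof -
  have "(\<Inter>x \<in> f ` I. cnbhd E' x) = (\<Inter>c \<in> I. cnbhd E' (f c))"
    by (simp only: image_image)
  also have "\<dots> = (\<Inter>c \<in> I. f ` cnbhd E c)"
    using I by (intro INF_cong refl cnbhd_relabel) blast
  also have "\<dots> = f ` (\<Inter>c \<in> I. cnbhd E c)"
    using cnbhd_subset[OF g] I by (intro image_INT[OF inj _ c, symmetric]) blast
  finally show ?thesis .
qed

lemma is_SLD_relabel_iff:
  assumes C: "C \<subseteq> V"
  shows "is_SLD (f ` V) E' (f ` C) \<longleftrightarrow> is_SLD V E C"
proof -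
  have rest: "f ` V - f ` C = f ` (V - C)" using inj_on_image_set_diff[OF inj _ C] by simp
  have located_iff:
    "(Icode E' (f ` C) (f u) \<noteq> {} \<and> (\<Inter>x \<in> Icode E' (f ` C) (f u). cnbhd E' x) = {f u})
      \<longleftrightarrow> (Icode E C u \<noteq> {} \<and> (\<Inter>c \<in> Icode E C u. cnbhd E c) = {u})" if u: "u \<in> V" for u
  proof (cases "Icode E C u = {}")
    case False
    then obtain c where c: "c \<in> Icode E C u" by blast
    have I: "Icode E C u \<subseteq> V" using cnbhd_subset[OF g u] unfolding Icode_def by blast
    have "(\<Inter>c \<in> Icode E C u. cnbhd E c) \<subseteq> cnbhd E c" using c by (rule INT_lower)
    also have "\<dots> \<subseteq> V" using cnbhd_subset[OF g] I c by blast
    finally have "f ` (\<Inter>c \<in> Icode E C u. cnbhd E c) = f ` {u} \<longleftrightarrow> (\<Inter>c \<in> Icode E C u. cnbhd E c) = {u}"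
      using u by (intro relabel_image_eq_iff) simp_all
    then show ?thesis
      unfolding Icode_relabel[OF u C] INT_cnbhd_relabel[OF I c] using False by simp
  qed (simp add: Icode_relabel[OF u C])
  have "is_code (f ` V) (f ` C) \<longleftrightarrow> is_code V C"
    using C relabel_image_eq_iff unfolding is_code_def by auto
  moreover have "(\<forall>x \<in> f ` V - f ` C. Icode E' (f ` C) x \<noteq> {} \<and> (\<Inter>y \<in> Icode E' (f ` C) x. cnbhd E' y) = {x})
      \<longleftrightarrow> (\<forall>u \<in> V - C. Icode E C u \<noteq> {} \<and> (\<Inter>c \<in> Icode E C u. cnbhd E c) = {u})"
    unfolding rest ball_simps(9) by (intro ball_cong refl located_iff) blast
  ultimately show ?thesis unfolding is_SLD_def by blast
qed

lemma gamma_LD_relabel: "gamma_LD (f ` V) E' = gamma_LD V E"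
  unfolding gamma_LD_def
  using card_sets_image_eq[where P = "is_LD V E" and Q = "is_LD (f ` V) E'",
      OF inj LD_code_subset LD_code_subset is_LD_relabel_iff] by simp

lemma gamma_SLD_relabel: "gamma_SLD (f ` V) E' = gamma_SLD V E"
  unfolding gamma_SLD_def
  using card_sets_image_eq[where P = "is_SLD V E" and Q = "is_SLD (f ` V) E'",
      OF inj SLD_code_subset SLD_code_subset is_SLD_relabel_iff] by simp

end

lemma exists_nat_graph_same_gammas:
  assumes "is_graph V E" and "V \<noteq> {}"
  shows "\<exists>(V' :: nat set) E'. is_graph V' E' \<and> V' \<noteq> {} \<and>
           gamma_LD V' E' = gamma_LD V E \<and> gamma_SLD V' E' = gamma_SLD V E"
proof -
  obtain f :: "'a \<Rightarrow> nat" where f: "inj_on f V"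
    using finite_imp_inj_to_nat_seg[OF is_graph_finite[OF assms(1)]] by blast
  show ?thesis
    using is_graph_relabel[OF assms(1) f] gamma_LD_relabel[OF assms(1) f]
      gamma_SLD_relabel[OF assms(1) f] assms(2)
    by (intro exI[of _ "f ` V"] exI[of _ "relabel_edges f V E"]) simp
qed

lemma exists_gadget_family:
  assumes "1 \<le> j" and "j \<le> k" and "k \<le> 2 ^ j - 1"
  shows "\<exists>F. gadget j F \<and> card F = k"
proof -
  define P where "P = Pow {0..<j} - {{}}"
  define R where "R = insert {0..<j} ((\<lambda>c. {0..<j} - {c}) ` {1..<j})"
  have "finite P" unfolding P_def by simp
  have "{0..<j} \<in> P" unfolding P_def using assms(1) by auto
  moreover have "{0..<j} - {c} \<in> P" if "c \<in> {1..<j}" for c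
  proof -
    have "0 \<in> {0..<j} - {c}" using that by simp
    then show ?thesis unfolding P_def by blast
  qed
  ultimately have RP: "R \<subseteq> P" unfolding R_def by blast
  have "card R \<le> Suc (card ((\<lambda>c. {0..<j} - {c}) ` {1..<j}))"
    unfolding R_def by (rule card_insert_le_m1) auto
  also have "\<dots> \<le> j" using card_image_le[of "{1..<j}" "\<lambda>c. {0..<j} - {c}"] assms(1) by simp
  finally have "card R \<le> j" .
  have "card P = 2 ^ j - 1"
    unfolding P_def by (simp add: card_Pow card_Diff_singleton del: Pow_def)
  then have "k - card R \<le> card (P - R)"
    using assms(3) RP \<open>finite P\<close> by (simp add: card_Diff_subset finite_subset)
  then obtain G where G: "G \<subseteq> P - R" "card G = k - card R" "finite G"
    by (rule obtain_subset_with_card_n)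
  have "finite R" using RP \<open>finite P\<close> finite_subset by blast
  then have "card (R \<union> G) = k"
    using G \<open>card R \<le> j\<close> assms(2) by (subst card_Un_disjoint) auto
  moreover have "gadget j (R \<union> G)"
    using RP G unfolding gadget_def P_def R_def by auto
  ultimately show ?thesis by blast
qed

lemma exists_bit_length:
  assumes "1 \<le> k" and "k < 2 ^ a"
  shows "\<exists>j. 1 \<le> j \<and> j \<le> a \<and> 2 ^ (j - 1) \<le> k \<and> k < (2::nat) ^ j"
proof -
  define j where "j = (LEAST j. k < (2::nat) ^ j)"
  have "k < 2 ^ j" unfolding j_def using assms(2) by (rule LeastI)
  moreover have "j \<le> a" unfolding j_def using assms(2) by (rule Least_le)
  moreover have "1 \<le> j" using \<open>k < 2 ^ j\<close> assms(1) by (cases j) auto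
  moreover have "\<not> k < 2 ^ (j - 1)"
    using not_less_Least[of "j - 1" "\<lambda>j. k < 2 ^ j"] \<open>1 \<le> j\<close> unfolding j_def by simp
  ultimately show ?thesis by (intro exI[of _ j]) simp
qed

text \<open>The clique size \<open>j\<close> is the number of binary digits of \<open>k\<close>: then \<open>k < 2 ^ j\<close> subset vertices
  fit, and \<open>2 ^ (j - 1) \<le> k\<close> forces all \<open>j\<close> clique vertices into every locating-dominating code.\<close>
lemma exists_graph_with_gammas:
  assumes "1 \<le> a" and "k < 2 ^ a"
  shows "\<exists>(V :: nat set) E. is_graph V E \<and> V \<noteq> {} \<and>
           gamma_LD V E = a \<and> gamma_SLD V E = a + k"
proof -
  obtain j F where F: "gadget j F" "j \<le> a" "card F = k" "\<And>m. m < j \<Longrightarrow> 2 ^ m \<le> k"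
  proof (cases "k = 0")
    case True
    have "gadget 0 {}" by unfold_locales auto
    then show ?thesis using True that by fastforce
  next
    case False
    then obtain j where j: "1 \<le> j" "j \<le> a" "2 ^ (j - 1) \<le> k" "k < 2 ^ j"
      using exists_bit_length[OF _ assms(2)] by auto
    have "j - 1 < 2 ^ (j - 1)" by (rule less_exp)
    then have "j \<le> k" and "k \<le> 2 ^ j - 1" using j(3,4) by linarith+
    then obtain F where "gadget j F" "card F = k"
      using exists_gadget_family[OF j(1)] by blast
    moreover have "2 ^ m \<le> k" if "m < j" for m
    proof -
      have "(2::nat) ^ m \<le> 2 ^ (j - 1)" using that by (intro power_increasing) simp_all
      then show ?thesis using j(3) by linarith
    qed
    ultimately show ?thesis using that j(2) by blast
  qed
  interpret gadget j F by (rule F(1))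
  have "j + (a - j) = a" using F(2) by simp
  then have "gamma_LD (gadget_vertices j (a - j) F) E = a"
    and "gamma_SLD (gadget_vertices j (a - j) F) E = a + k"
    using gamma_LD_SLD_eq[of "a - j"] F(3,4) assms(1) by simp_all
  moreover have "gadget_vertices j (a - j) F \<noteq> {}"
    using assms(1) unfolding gadget_vertices_def by auto
  ultimately show ?thesis
    using exists_nat_graph_same_gammas[OF is_graph] by metis
qed

theorem mainTheorem19:
  fixes a b :: nat
  assumes "0 < a" and "0 < b"
  shows "(\<exists>(V :: nat set) E. is_graph V E \<and> V \<noteq> {} \<and>
            gamma_LD V E = a \<and> gamma_SLD V E = b)
         \<longleftrightarrow> (0 \<le> int b - int a \<and> int b - int a \<le> 2 ^ a - 1)"
proof
  assume "\<exists>(V :: nat set) E. is_graph V E \<and> V \<noteq> {} \<and> gamma_LD V E = a \<and> gamma_SLD V E = b"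
  then obtain V :: "nat set" and E
    where g: "is_graph V E" "V \<noteq> {}" and "gamma_LD V E = a" "gamma_SLD V E = b" by blast
  then have "a \<le> b" and "b + 1 \<le> a + 2 ^ a"
    using gamma_LD_le_gamma_SLD[OF g] gamma_SLD_le_card[OF g] card_le_gamma_LD_exp[OF g] by auto
  then have "int a \<le> int b" and "int (b + 1) \<le> int (a + 2 ^ a)"
    by (simp_all only: of_nat_le_iff)
  then have "int a \<le> int b" and "int b + 1 \<le> int a + 2 ^ a"
    by (simp_all only: of_nat_add of_nat_1 of_nat_power of_nat_numeral)
  then show "0 \<le> int b - int a \<and> int b - int a \<le> 2 ^ a - 1" by linarith
next
  assume "0 \<le> int b - int a \<and> int b - int a \<le> 2 ^ a - 1"
  then have "int a \<le> int b" and "int b + 1 \<le> int a + 2 ^ a" by linarith+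
  then have "int a \<le> int b" and "int (b + 1) \<le> int (a + 2 ^ a)"
    by (simp_all only: of_nat_add of_nat_1 of_nat_power of_nat_numeral)
  then have "a \<le> b" and "b + 1 \<le> a + 2 ^ a"
    by (simp_all only: of_nat_le_iff)
  then have "b - a < 2 ^ a" by linarith
  with \<open>a \<le> b\<close> show "\<exists>(V :: nat set) E. is_graph V E \<and> V \<noteq> {} \<and> gamma_LD V E = a \<and> gamma_SLD V E = b"
    using exists_graph_with_gammas[of a "b - a"] assms(1) by simp
qed

end
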